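(* Let $t$ be a term and $\vec x=x_1\dots x_n$ a vector of pairwise distinct program variables. If for every $\vec v\in\mathbb{Z}^n$, $$\vec x(1)=\vec x(2)\wedge\vec x(3)=\vec v\ \vdash\ \mathrm{wp}\,[1:t,2:t,3:t]\,\{\vec x(2)=\vec v\Rightarrow\vec x(1)=\vec x(3)\},$$ then for every $\vec v\in\mathbb{Z}^n$, $$\vec x(2)=\vec v\ \vdash\ \mathrm{wp}\,[1:t,2:t]\,\{\vec x(1)=\vec v\Rightarrow\vec x(2)=\vec v\}.$$
   Context: Setting. $\mathrm{Val}=\mathbb{Z}$; $\mathrm{PVar}$ is a countably infinite set of program variables; a store is a function $s:\mathrm{PVar}\to\mathrm{Val}$; indices are $\mathrm{Idx}=\mathbb{N}$. Terms of a first-order imperative language are generated by $t ::= v \mid x \mid * \mid t\oplus t \mid \mathtt{skip}\mid x:=t \mid t;t \mid \mathtt{if}\ t\ \mathtt{then}\ t\ \mathtt{else}\ t \mid \mathtt{while}\ t\ \mathtt{do}\ t$, with a nondeterministic big-step semantics $t,s\Downarrow v,s'$ ($t$ run from $s$ may terminate with return value $v$ and final store $s'$; $*$ returns an arbitrary integer). A hyper-term is a finitely supported partial map from $\mathrm{Idx}$ to terms, written $[i_1:t_1,\dots,i_n:t_n]$; a hyper-store is a total function $\mathbf s:\mathrm{Idx}\to\mathrm{Store}$. $\mathbf t,\mathbf s\Downarrow\mathbf v,\mathbf s'$ holds iff for every $i\in\mathrm{supp}(\mathbf t)$, $\mathbf t(i),\mathbf s(i)\Downarrow\mathbf v(i),\mathbf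 s'(i)$, and for every $i\notin\mathrm{supp}(\mathbf t)$, $\mathbf s'(i)=\mathbf s(i)$. A hyper-assertion is a predicate on hyper-stores; connectives are pointwise; $P\vdash R$ means $\forall\mathbf s.\ P(\mathbf s)\Rightarrow R(\mathbf s)$. $\mathrm{wp}\,\mathbf t\,\{Q\}(\mathbf s):\iff\forall\mathbf v,\mathbf s'.\ (\mathbf t,\mathbf s\Downarrow\mathbf v,\mathbf s')\Rightarrow Q(\mathbf s')$ for a hyper-assertion $Q$. $\vec x(i)=\vec v$ is the hyper-assertion $\forall k.\ \mathbf s(i)(x_k)=v_k$, and $\vec x(i)=\vec x(j)$ is $\forall k.\ \mathbf s(i)(x_k)=\mathbf s(j)(x_k)$. *)

theory Defs
  imports Main
begin

type_synonym val = int
type_synonym pvar = nat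
type_synonym store = "pvar \<Rightarrow> val"
type_synonym idx = nat

datatype "term" =
    Val val
  | Var pvar
  | Star
  | BinOp "val \<Rightarrow> val \<Rightarrow> val" "term" "term"
  | Skip
  | Assign pvar "term"
  | Seq "term" "term"
  | If "term" "term" "term"
  | While "term" "term"

(* Conventions: a condition is true iff its value is nonzero; skip and while return 0;
   an assignment returns the assigned value; a sequence returns the value of its second part. *)
inductive big_step :: "term \<Rightarrow> store \<Rightarrow> val \<Rightarrow> store \<Rightarrow> bool" where
  BVal: "big_step (Val v) s v s"
| BVar: "big_step (Var x) s (s x) s"
| BStar: "big_step Star s v s"
| BBinOp: "big_step t1 s v1 s1 \<Longrightarrow> big_step t2 s1 v2 s2 \<Longrightarrow> big_step (BinOp f t1 t2) s (f v1 v2) s2"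
| BSkip: "big_step Skip s 0 s"
| BAssign: "big_step t s v s' \<Longrightarrow> big_step (Assign x t) s v (s'(x := v))"
| BSeq: "big_step t1 s v1 s1 \<Longrightarrow> big_step t2 s1 v2 s2 \<Longrightarrow> big_step (Seq t1 t2) s v2 s2"
| BIfT: "big_step b s v s1 \<Longrightarrow> v \<noteq> 0 \<Longrightarrow> big_step t1 s1 w s2 \<Longrightarrow> big_step (If b t1 t2) s w s2"
| BIfF: "big_step b s 0 s1 \<Longrightarrow> big_step t2 s1 w s2 \<Longrightarrow> big_step (If b t1 t2) s w s2"
| BWhileF: "big_step b s 0 s1 \<Longrightarrow> big_step (While b c) s 0 s1"
| BWhileT: "big_step b s v s1 \<Longrightarrow> v \<noteq> 0 \<Longrightarrow> big_step c s1 w s2 \<Longrightarrow>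
            big_step (While b c) s2 u s3 \<Longrightarrow> big_step (While b c) s u s3"

type_synonym hterm = "idx \<rightharpoonup> term"   (* finitely supported partial map *)
type_synonym hstore = "idx \<Rightarrow> store"
type_synonym hval = "idx \<Rightarrow> val"
type_synonym hassn = "hstore \<Rightarrow> bool"

definition hbig_step :: "hterm \<Rightarrow> hstore \<Rightarrow> hval \<Rightarrow> hstore \<Rightarrow> bool" where
  "hbig_step T S V S' \<longleftrightarrow>
     (\<forall>i t. T i = Some t \<longrightarrow> big_step t (S i) (V i) (S' i)) \<and>
     (\<forall>i. T i = None \<longrightarrow> S' i = S i)"

definition wp :: "hterm \<Rightarrow> hassn \<Rightarrow> hassn" where
  "wp T Q S \<longleftrightarrow> (\<forall>V S'. hbig_step T S V S' \<longrightarrow> Q S')"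

definition entails :: "hassn \<Rightarrow> hassn \<Rightarrow> bool" (infix "\<turnstile>\<^sub>h" 40) where
  "P \<turnstile>\<^sub>h R \<longleftrightarrow> (\<forall>S. P S \<longrightarrow> R S)"

definition hand :: "hassn \<Rightarrow> hassn \<Rightarrow> hassn" where
  "hand P R S \<longleftrightarrow> P S \<and> R S"

definition himp :: "hassn \<Rightarrow> hassn \<Rightarrow> hassn" where
  "himp P R S \<longleftrightarrow> (P S \<longrightarrow> R S)"

definition vars_eq_vals :: "pvar list \<Rightarrow> idx \<Rightarrow> val list \<Rightarrow> hassn" where
  "vars_eq_vals xs i vs S \<longleftrightarrow> (\<forall>k < length xs. S i (xs ! k) = vs ! k)"

definition vars_eq_vars :: "pvar list \<Rightarrow> idx \<Rightarrow> idx \<Rightarrow> hassn" where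
  "vars_eq_vars xs i j S \<longleftrightarrow> (\<forall>k < length xs. S i (xs ! k) = S j (xs ! k))"

end

theory Submission
  imports Defs
begin

text \<open>Given runs of \<open>t\<close> from \<open>s\<^sub>1\<close> and \<open>s\<^sub>2\<close> with \<open>x(s\<^sub>2) = v\<close> and \<open>x(s\<^sub>1') = v\<close>, feed the
  three-copy hypothesis the hyper-store \<open>[1: s\<^sub>1, 2: s\<^sub>1, 3: s\<^sub>2]\<close>, letting copies 1 and 2 both
  replay the run from \<open>s\<^sub>1\<close>. Copy 2 then ends with \<open>x = v\<close>, so the hypothesis forces copy 3,
  i.e. the run from \<open>s\<^sub>2\<close>, to end with the same values of \<open>x\<close> as copy 1, namely \<open>v\<close>.\<close>

lemma vars_eq_vals_iff_map:
  "length vs = length xs \<Longrightarrow> vars_eq_vals xs i vs S \<longleftrightarrow> map (S i) xs = vs"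
  by (auto simp: vars_eq_vals_def list_eq_iff_nth_eq)

lemma vars_eq_vars_iff_map:
  "vars_eq_vars xs i j S \<longleftrightarrow> map (S i) xs = map (S j) xs"
  by (auto simp: vars_eq_vars_def list_eq_iff_nth_eq)

lemma hbig_step_SomeD:
  "hbig_step T S V S' \<Longrightarrow> T i = Some t \<Longrightarrow> big_step t (S i) (V i) (S' i)"
  by (simp add: hbig_step_def)

lemma entails_wpD:
  "P \<turnstile>\<^sub>h wp T Q \<Longrightarrow> P S \<Longrightarrow> hbig_step T S V S' \<Longrightarrow> Q S'"
  by (simp add: entails_def wp_def)

lemma big_step_final_vars_if_three_copies:
  assumes hyp: "hand (vars_eq_vars xs 1 2) (vars_eq_vals xs 3 vs)
                  \<turnstile>\<^sub>h wp [1 \<mapsto> t, 2 \<mapsto> t, 3 \<mapsto> t]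
                          (himp (vars_eq_vals xs 2 vs) (vars_eq_vars xs 1 3))"
    and len: "length vs = length xs"
    and run\<^sub>1: "big_step t s\<^sub>1 v\<^sub>1 s\<^sub>1'" and final\<^sub>1: "map s\<^sub>1' xs = vs"
    and run\<^sub>2: "big_step t s\<^sub>2 v\<^sub>2 s\<^sub>2'" and initial\<^sub>2: "map s\<^sub>2 xs = vs"
  shows "map s\<^sub>2' xs = vs"
proof -
  define S where "S = (\<lambda>i::idx. if i = 3 then s\<^sub>2 else s\<^sub>1)"
  define S' where "S' = (\<lambda>i::idx. if i = 3 then s\<^sub>2' else if i = 1 \<or> i = 2 then s\<^sub>1' else s\<^sub>1)"
  define V where "V = (\<lambda>i::idx. if i = 3 then v\<^sub>2 else v\<^sub>1)"
  have "hand (vars_eq_vars xs 1 2) (vars_eq_vals xs 3 vs) S"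
    using initial\<^sub>2 len by (simp add: hand_def vars_eq_vars_iff_map vars_eq_vals_iff_map S_def)
  moreover have "hbig_step [1 \<mapsto> t, 2 \<mapsto> t, 3 \<mapsto> t] S V S'"
    using run\<^sub>1 run\<^sub>2 by (simp add: hbig_step_def S_def S'_def V_def)
  ultimately have "himp (vars_eq_vals xs 2 vs) (vars_eq_vars xs 1 3) S'"
    by (rule entails_wpD[OF hyp])
  moreover have "vars_eq_vals xs 2 vs S'"
    using final\<^sub>1 len by (simp add: vars_eq_vals_iff_map S'_def)
  ultimately have "map s\<^sub>1' xs = map s\<^sub>2' xs"
    by (simp add: himp_def vars_eq_vars_iff_map S'_def)
  with final\<^sub>1 show ?thesis by simp
qed

theorem mainTheorem17:
  fixes t :: "term" and xs :: "pvar list"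
  assumes "distinct xs"
    and "\<forall>vs. length vs = length xs \<longrightarrow>
           hand (vars_eq_vars xs 1 2) (vars_eq_vals xs 3 vs)
           \<turnstile>\<^sub>h wp [1 \<mapsto> t, 2 \<mapsto> t, 3 \<mapsto> t]
                   (himp (vars_eq_vals xs 2 vs) (vars_eq_vars xs 1 3))"
  shows "\<forall>vs. length vs = length xs \<longrightarrow>
           vars_eq_vals xs 2 vs
           \<turnstile>\<^sub>h wp [1 \<mapsto> t, 2 \<mapsto> t]
                   (himp (vars_eq_vals xs 1 vs) (vars_eq_vals xs 2 vs))"
proof (intro allI impI)
  fix vs :: "val list"
  assume len: "length vs = length xs"
  show "vars_eq_vals xs 2 vs \<turnstile>\<^sub>h wp [1 \<mapsto> t, 2 \<mapsto> t]
          (himp (vars_eq_vals xs 1 vs) (vars_eq_vals xs 2 vs))"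
    unfolding entails_def wp_def himp_def
  proof (intro allI impI)
    fix S V S'
    assume "vars_eq_vals xs 2 vs S" and run: "hbig_step [1 \<mapsto> t, 2 \<mapsto> t] S V S'"
      and "vars_eq_vals xs 1 vs S'"
    with len have "map (S 2) xs = vs" and "map (S' 1) xs = vs"
      by (simp_all add: vars_eq_vals_iff_map)
    moreover have "big_step t (S 1) (V 1) (S' 1)" and "big_step t (S 2) (V 2) (S' 2)"
      using hbig_step_SomeD[OF run] by simp_all
    ultimately have "map (S' 2) xs = vs"
      using big_step_final_vars_if_three_copies[OF assms(2)[rule_format, OF len] len]
      by blast
    with len show "vars_eq_vals xs 2 vs S'"
      by (simp add: vars_eq_vals_iff_map)
  qed
qed

end
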